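(* Let $f$ be a bounded analytic function in the unit disc $D=\{|z|<1\}$, written as $f(z)=\sum_{j=0}^\infty(-a_j)z^j$, and let $n_0=n_0(f)$. Then there exists an integer $n_1=n_1(f)\ge n_0$ such that for every $n\ge n_1$, with $N=2n+1$: (1) all $N$ roots $z_1,\dots,z_N$ of the polynomial $P_n(f;z)$ are simple and lie on the unit circle $|z|=1$; (2) the points $\lambda_k:=z_k^{-1}$, $k=1,\dots,N$, are pairwise distinct, satisfy $|\lambda_k|=1$, and \[S_{j+1}(\lambda)-a_j=0,\qquad j=0,\dots,n-1,\] \[|S_{j+1}(\lambda)-a_j|<\frac{r^{n+1}(r-\varepsilon)^{-j}}{2\varepsilon(1-r)},\qquad j\ge n,\] for any numbers $r,\varepsilon$ with $0<\varepsilon<r<1$. Moreover, for the equalities $S_{j+1}(\lambda)-a_j=0$, $j=0,\dots,n-1$, to hold (with $\lambda_k$ the reciprocals of the roots of $P_n(f;z)$) it suffices that $n\ge n_0$.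
   Context: For $f$ analytic in $D$, $s_n(z)=s_n(f;z)$ denotes the $n$-th Taylor polynomial (degree $\le n$) of $\exp\left(\int_0^z f(\zeta)\,d\zeta\right)$; note $s_n(0)=1$. With $N:=2n+1$, set $P_n(z)=P_n(f;z):=s_n(z)+z^N\overline{s}_n(1/z)$, where $\overline{s}_n$ is the polynomial whose coefficients are the complex conjugates of those of $s_n$; $\deg P_n=N$. $n_0(f)$ is the smallest natural number $n$ such that $s_n(f;z)$ has no roots in the closed disc $|z|\le 1$. For points $\lambda_1,\dots,\lambda_N$ on the unit circle, $S_\nu(\lambda)=\lambda_1^\nu+\dots+\lambda_N^\nu$, $\nu\in\mathbb{N}$. *)

theory Defs
  imports "HOL-Complex_Analysis.Complex_Analysis" "HOL-Computational_Algebra.Polynomial"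
begin

definition prim :: "(complex \<Rightarrow> complex) \<Rightarrow> complex \<Rightarrow> complex" where
  "prim f z = contour_integral (linepath 0 z) f"

definition tcoeff :: "(complex \<Rightarrow> complex) \<Rightarrow> nat \<Rightarrow> complex" where
  "tcoeff f k = (deriv ^^ k) (\<lambda>z. exp (prim f z)) 0 / of_nat (fact k)"

definition spoly :: "(complex \<Rightarrow> complex) \<Rightarrow> nat \<Rightarrow> complex poly" where
  "spoly f n = (\<Sum>k\<le>n. monom (tcoeff f k) k)"

text \<open>P_n(f;z) = s_n(z) + z^N conj-s_n(1/z), N = 2n+1.\<close>
definition Ppoly :: "(complex \<Rightarrow> complex) \<Rightarrow> nat \<Rightarrow> complex poly" where
  "Ppoly f n = spoly f n + (\<Sum>k\<le>n. monom (cnj (tcoeff f k)) (2*n+1 - k))"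

definition s_nonvanishing :: "(complex \<Rightarrow> complex) \<Rightarrow> nat \<Rightarrow> bool" where
  "s_nonvanishing f n \<longleftrightarrow> (\<forall>z. norm z \<le> 1 \<longrightarrow> poly (spoly f n) z \<noteq> 0)"

definition n0 :: "(complex \<Rightarrow> complex) \<Rightarrow> nat" where
  "n0 f = (LEAST n. s_nonvanishing f n)"

definition Spow :: "(complex \<Rightarrow> complex) \<Rightarrow> nat \<Rightarrow> nat \<Rightarrow> complex" where
  "Spow f n \<nu> = (\<Sum>z\<in>#proots (Ppoly f n). (inverse z) ^ \<nu>)"

end

theory Submission
  imports Defs "HOL-Computational_Algebra.Fundamental_Theorem_Algebra"
begin

text \<open>
  Let E = exp F with F' = f, and E(z) = sum t(k) z^k. Then E' = f E, i.e.
  (k+1) t(k+1) = - sum_{i<=k} t(i) a(k-i). The polynomial P_n is monic with P_n(0) = 1 and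
  its coefficients of degree at most n are t(0), ..., t(n); so Newton's identities
  P_n' = - P_n sum_k S_(k+1) z^k, compared with that recursion, give S_(j+1) = a(j) for j < n
  and S_(n+1) - a(n) = (n+1) (t(n+1) - conj t(n)).

  Since E' = f E is bounded, Bessel's inequality gives sum k^2 |t(k)|^2 < oo. Hence
  sum |t(k)| < oo, so s_n -> E uniformly on the closed disc and |s_n| >= exp(-M)/2 there for
  large n; and k t(k) -> 0, which makes S_(n+1) - a(n) small.

  P_n = s_n + z^(n+1) s_n^* with s_n^*(z) = sum_{k<=n} conj t(k) z^(n-k), and z^n s_n^* / s_n is
  unimodular on the circle; by the maximum principle P_n has no roots inside the disc, and since
  P_n is self-inversive, P_n(z) = z^N conj (P_n (1 / conj z)), none outside. At a root z one has
  z P_n'(z) = d - N s_n(z) - z^N conj d with d = sum_{k<=n} k t(k) z^k, and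
  |d| <= sum_{k<=n} k |t(k)| = o(n) (Cesaro), which excludes multiple roots as soon as
  N |s_n| > 2 |d|.

  For j > n the claimed bound exceeds 2n+2, which bounds |S_(j+1) - a(j)| trivially once
  |a(j)| <= 1.
\<close>

lemma prim_has_field_derivative:
  assumes hol: "f holomorphic_on S" and S: "open S" "convex S" "0 \<in> S" and z: "z \<in> S"
  shows "(prim f has_field_derivative f z) (at z)"
proof -
  have "((\<lambda>x. contour_integral (linepath 0 x) f) has_field_derivative f z) (at z within S)"
  proof (rule triangle_contour_integrals_convex_primitive)
    show "continuous_on S f" using hol holomorphic_on_imp_continuous_on by blast
    fix b c assume b: "b \<in> S" and c: "c \<in> S"
    have "(f has_contour_integral 0) (linepath 0 b +++ linepath b c +++ linepath c 0)"
    proof (rule Cauchy_theorem_convex_simple[OF hol \<open>convex S\<close>])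
      have "path_image (linepath 0 b +++ linepath b c +++ linepath c 0) =
            closed_segment 0 b \<union> closed_segment b c \<union> closed_segment c 0"
        by (simp add: path_image_join Un_assoc)
      also have "\<dots> \<subseteq> S"
        using b c S by (intro Un_least closed_segment_subset) auto
      finally show "path_image (linepath 0 b +++ linepath b c +++ linepath c 0) \<subseteq> S" .
    qed auto
    then show "contour_integral (linepath 0 b) f + contour_integral (linepath b c) f +
               contour_integral (linepath c 0) f = 0"
      by (rule has_chain_integral_chain_integral3)
  qed (use S z in auto)
  then show ?thesis unfolding prim_def[abs_def]
    using at_within_open[OF z \<open>open S\<close>] by simp
qed

lemma norm_prim_le:
  assumes hol: "f holomorphic_on S" and S: "open S" "convex S" "0 \<in> S" and z: "z \<in> S"
    and M: "\<And>w. w \<in> S \<Longrightarrow> norm (f w) \<le> M"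
  shows "norm (prim f z) \<le> M * norm z"
proof -
  have M0: "0 \<le> M" using M[OF \<open>0 \<in> S\<close>] norm_ge_zero order_trans by blast
  have seg: "closed_segment 0 z \<subseteq> S"
    using S z by (intro closed_segment_subset) auto
  have "(f has_contour_integral prim f z) (linepath 0 z)"
    unfolding prim_def
    by (rule has_contour_integral_integral, rule contour_integrable_holomorphic_simple[OF hol])
       (use seg S in auto)
  then have "norm (prim f z) \<le> M * norm (z - 0)"
    by (intro has_contour_integral_bound_linepath) (use M0 M seg in auto)
  then show ?thesis by simp
qed

definition exp_prim :: "(complex \<Rightarrow> complex) \<Rightarrow> complex \<Rightarrow> complex" where
  "exp_prim f z = exp (prim f z)"

lemma exp_prim_has_field_derivative:
  assumes "f holomorphic_on ball 0 1" and "z \<in> ball 0 1"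
  shows "(exp_prim f has_field_derivative f z * exp_prim f z) (at z)"
  unfolding exp_prim_def[abs_def]
  using DERIV_chain2[OF DERIV_exp prim_has_field_derivative[OF assms(1) _ _ _ assms(2)]]
  by (simp add: mult.commute)

lemma holomorphic_exp_prim: "f holomorphic_on ball 0 1 \<Longrightarrow> exp_prim f holomorphic_on ball 0 1"
  using exp_prim_has_field_derivative by (metis holomorphic_on_open open_ball)

lemma tcoeff_eq_higher_deriv_exp_prim: "tcoeff f k = (deriv ^^ k) (exp_prim f) 0 / fact k"
  by (simp add: tcoeff_def exp_prim_def[abs_def])

lemma tcoeff_0 [simp]: "tcoeff f 0 = 1"
  by (simp add: tcoeff_def prim_def)

lemma exp_prim_sums:
  assumes "f holomorphic_on ball 0 1" and "z \<in> ball 0 1"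
  shows "(\<lambda>k. tcoeff f k * z ^ k) sums exp_prim f z"
  using holomorphic_power_series[OF holomorphic_exp_prim[OF assms(1)] assms(2)]
  by (simp add: tcoeff_eq_higher_deriv_exp_prim)

lemma norm_exp_prim_bounds:
  assumes hol: "f holomorphic_on ball 0 1"
    and M: "\<And>z. z \<in> ball 0 1 \<Longrightarrow> norm (f z) \<le> M" and z: "z \<in> ball 0 1"
  shows "norm (exp_prim f z) \<le> exp M" "exp (- M) \<le> norm (exp_prim f z)"
proof -
  have "norm (prim f z) \<le> M * norm z" by (rule norm_prim_le[OF hol _ _ _ z M]) auto
  also have "\<dots> \<le> M"
    using z order_trans[OF norm_ge_zero M[of 0]] by (intro mult_left_le) auto
  finally have "\<bar>Re (prim f z)\<bar> \<le> M" using abs_Re_le_cmod[of "prim f z"] by linarith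
  then show "norm (exp_prim f z) \<le> exp M" "exp (- M) \<le> norm (exp_prim f z)"
    by (auto simp: exp_prim_def norm_exp_eq_Re)
qed

section \<open>Bessel's inequality for Taylor coefficients\<close>

definition turn :: "real \<Rightarrow> complex" where
  "turn t = exp (2 * of_real pi * \<i> * of_real t)"

lemma norm_turn [simp]: "norm (turn t) = 1"
  unfolding turn_def by (simp add: norm_exp_eq_Re)

lemma cnj_turn: "cnj (turn t) = inverse (turn t)"
  unfolding turn_def by (simp add: exp_cnj exp_minus[symmetric])

lemma turn_nonzero [simp]: "turn t \<noteq> 0"
  unfolding turn_def by simp

lemma continuous_on_turn: "continuous_on A turn"
  unfolding turn_def by (intro continuous_intros)

lemma higher_deriv_eq_coeff_if_sums:
  fixes g :: "complex \<Rightarrow> complex"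
  assumes "\<And>z. z \<in> ball 0 1 \<Longrightarrow> (\<lambda>k. b k * z ^ k) sums g z"
  shows "(deriv ^^ k) g 0 / fact k = b k"
proof -
  have ev: "eventually (\<lambda>u. u \<in> ball 0 1) (nhds (0::complex))"
    by (intro eventually_nhds_in_open) auto
  have "g has_fps_expansion Abs_fps b"
    by (rule has_fps_expansionI, rule eventually_mono[OF ev]) (use assms in simp)
  from fps_nth_fps_expansion[OF this, of k] show ?thesis by simp
qed

lemma has_integral_taylor_coeff_circle:
  assumes hol: "g holomorphic_on ball 0 1" and r: "0 < r" "r < 1"
  shows "((\<lambda>t. g (of_real r * turn t) * cnj (turn t) ^ k) has_integral
           (of_real r ^ k * ((deriv ^^ k) g 0 / fact k))) {0..1}"
proof -
  have sub: "cball 0 r \<subseteq> ball (0::complex) 1" using r by auto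
  have cont: "continuous_on (cball 0 r) g"
    using holomorphic_on_imp_continuous_on[OF holomorphic_on_subset[OF hol sub]] .
  have holr: "g holomorphic_on ball 0 r"
    using holomorphic_on_subset[OF hol] sub ball_subset_cball by blast
  have C: "((\<lambda>u. g u / (u - 0) ^ Suc k) has_contour_integral
             ((2 * pi * \<i>) / fact k * (deriv ^^ k) g 0)) (circlepath 0 r)"
    by (rule Cauchy_has_contour_integral_higher_derivative_circlepath[OF cont holr]) (use r in simp)
  have eq: "g (circlepath 0 r x) / (circlepath 0 r x - 0) ^ Suc k *
          vector_derivative (circlepath 0 r) (at x within {0..1}) =
          g (of_real r * turn x) / (of_real r * turn x) ^ Suc k * (2 * pi * \<i> * r * turn x)"
    if "x \<in> {0..1}" for x
    using that by (subst vector_derivative_circlepath01) (auto simp: circlepath turn_def)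
  have "((\<lambda>t. g (of_real r * turn t) / (of_real r * turn t) ^ Suc k * (2 * pi * \<i> * r * turn t))
          has_integral ((2 * pi * \<i>) / fact k * (deriv ^^ k) g 0)) {0..1}"
    using C unfolding has_contour_integral_def by (subst (asm) has_integral_cong[OF eq])
  from has_integral_mult_left[OF this, of "of_real r ^ k / (2 * pi * \<i>)"]
  have "((\<lambda>t. g (of_real r * turn t) / (of_real r * turn t) ^ Suc k * (2 * pi * \<i> * r * turn t) *
          (of_real r ^ k / (2 * pi * \<i>))) has_integral (of_real r ^ k * ((deriv ^^ k) g 0 / fact k))) {0..1}"
    by (simp add: field_simps)
  moreover have "g (of_real r * turn t) / (of_real r * turn t) ^ Suc k * (2 * pi * \<i> * r * turn t) *
          (of_real r ^ k / (2 * pi * \<i>)) = g (of_real r * turn t) * inverse (turn t) ^ k" for t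
    using r by (simp add: field_simps power_mult_distrib)
  ultimately show ?thesis by (simp add: cnj_turn)
qed

lemma has_integral_times_cnj_poly_circle:
  assumes hol: "g holomorphic_on ball 0 1" and r: "0 < r" "r < 1"
  shows "((\<lambda>t. g (of_real r * turn t) * cnj (\<Sum>k\<le>K. d k * (of_real r * turn t) ^ k)) has_integral
          (\<Sum>k\<le>K. cnj (d k) * of_real r ^ k * (of_real r ^ k * ((deriv ^^ k) g 0 / fact k)))) {0..1}"
proof -
  have "((\<lambda>t. \<Sum>k\<le>K. cnj (d k) * of_real r ^ k * (g (of_real r * turn t) * cnj (turn t) ^ k)) has_integral
          (\<Sum>k\<le>K. cnj (d k) * of_real r ^ k * (of_real r ^ k * ((deriv ^^ k) g 0 / fact k)))) {0..1}"
    by (intro has_integral_sum has_integral_mult_right has_integral_taylor_coeff_circle[OF hol r]) auto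
  then show ?thesis
    by (subst has_integral_cong[symmetric]) (auto simp: sum_distrib_left power_mult_distrib mult_ac)
qed

lemma le_has_integral_norm_sq_if_projection:
  fixes u v :: "real \<Rightarrow> complex"
  assumes uv: "((\<lambda>t. u t * cnj (v t)) has_integral of_real S) A"
    and vv: "((\<lambda>t. v t * cnj (v t)) has_integral of_real S) A"
    and I: "((\<lambda>t. norm (u t) ^ 2) has_integral I) A"
  shows "S \<le> I"
proof -
  have Re_uv: "((\<lambda>t. Re (u t * cnj (v t))) has_integral S) A"
    using has_integral_Re[OF uv] by simp
  have Re_vv: "((\<lambda>t. Re (v t * cnj (v t))) has_integral S) A"
    using has_integral_Re[OF vv] by simp
  have "((\<lambda>t. norm (u t) ^ 2 - 2 * Re (u t * cnj (v t)) + Re (v t * cnj (v t))) has_integral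
          (I - 2 * S + S)) A"
    by (intro has_integral_add has_integral_diff I has_integral_mult_right Re_uv Re_vv)
  moreover have "norm (u t) ^ 2 - 2 * Re (u t * cnj (v t)) + Re (v t * cnj (v t)) =
      norm (u t - v t) ^ 2" for t
    unfolding cmod_power2 by (simp add: power2_eq_square algebra_simps)
  ultimately have "((\<lambda>t. norm (u t - v t) ^ 2) has_integral (I - S)) A" by simp
  then have "0 \<le> I - S" by (rule has_integral_nonneg) auto
  then show ?thesis by simp
qed

lemma bessel_inequality_circle:
  assumes hol: "g holomorphic_on ball 0 1" and M: "\<And>z. z \<in> ball 0 1 \<Longrightarrow> norm (g z) \<le> M"
    and r: "0 < r" "r < 1"
  shows "(\<Sum>k\<le>K. norm ((deriv ^^ k) g 0 / fact k) ^ 2 * r ^ (2*k)) \<le> M ^ 2"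
proof -
  define c where "c k = (deriv ^^ k) g 0 / fact k" for k
  define S where "S = (\<Sum>k\<le>K. norm (c k) ^ 2 * r ^ (2*k))"
  define p where "p z = (\<Sum>k\<le>K. c k * z ^ k)" for z
  define u where "u t = g (of_real r * turn t)" for t
  define v where "v t = p (of_real r * turn t)" for t
  have Sc: "(\<Sum>k\<le>K. cnj (c k) * of_real r ^ k * (of_real r ^ k * c k)) = of_real S"
    unfolding S_def of_real_sum
  proof (intro sum.cong refl)
    fix k
    have "complex_of_real (norm (c k) ^ 2) = c k * cnj (c k)" by (rule complex_norm_square)
    moreover have "complex_of_real (r ^ (2*k)) = of_real r ^ k * of_real r ^ k"
      by (simp add: power_add[symmetric] mult_2)
    ultimately show "cnj (c k) * of_real r ^ k * (of_real r ^ k * c k) =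
        complex_of_real (norm (c k) ^ 2 * r ^ (2*k))"
      by (simp only: of_real_mult) (simp add: mult_ac)
  qed
  have uv: "((\<lambda>t. u t * cnj (v t)) has_integral of_real S) {0..1}"
    using has_integral_times_cnj_poly_circle[OF hol r, where K=K and d=c] Sc
    unfolding u_def v_def p_def c_def by simp
  have holp: "p holomorphic_on ball 0 1" unfolding p_def by (intro holomorphic_intros)
  have cp: "(deriv ^^ k) p 0 / fact k = (if k \<le> K then c k else 0)" for k
  proof (rule higher_deriv_eq_coeff_if_sums)
    fix z :: complex
    have "(\<lambda>k. (if k \<le> K then c k else 0) * z ^ k) sums (\<Sum>k\<in>{..K}. (if k \<le> K then c k else 0) * z ^ k)"
      by (rule sums_finite) auto
    then show "(\<lambda>k. (if k \<le> K then c k else 0) * z ^ k) sums p z" by (simp add: p_def)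
  qed
  have vv: "((\<lambda>t. v t * cnj (v t)) has_integral of_real S) {0..1}"
    using has_integral_times_cnj_poly_circle[OF holp r, where K=K and d=c] Sc unfolding v_def cp
    by (simp add: p_def)
  have contu: "continuous_on {0..1} u"
    unfolding u_def
    by (rule continuous_on_compose2[OF holomorphic_on_imp_continuous_on[OF hol]])
       (use r in \<open>auto intro!: continuous_intros continuous_on_turn simp: norm_mult\<close>)
  have "(\<lambda>t. norm (u t) ^ 2) integrable_on {0..1}"
    by (rule integrable_continuous_interval) (intro continuous_intros contu)
  then obtain I where I: "((\<lambda>t. norm (u t) ^ 2) has_integral I) {0..1}"
    by (auto simp: integrable_on_def)
  have "S \<le> I" by (rule le_has_integral_norm_sq_if_projection[OF uv vv I])
  also have "I \<le> M ^ 2"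
  proof (rule has_integral_le[OF I has_integral_const_real[of "M^2" 0 1, simplified]])
    fix t
    have "norm (u t) \<le> M" unfolding u_def by (rule M) (use r in \<open>simp add: norm_mult\<close>)
    then show "norm (u t) ^ 2 \<le> M ^ 2" by (intro power_mono) auto
  qed
  finally show ?thesis by (simp add: S_def c_def)
qed

lemma bessel_inequality_taylor_coeffs:
  assumes hol: "g holomorphic_on ball 0 1" and M: "\<And>z. z \<in> ball 0 1 \<Longrightarrow> norm (g z) \<le> M"
  shows "(\<Sum>k\<le>K. norm ((deriv ^^ k) g 0 / fact k) ^ 2) \<le> M ^ 2"
proof -
  let ?S = "\<lambda>r::real. (\<Sum>k\<le>K. norm ((deriv ^^ k) g 0 / fact k) ^ 2 * r ^ (2*k))"
  have "(?S \<longlongrightarrow> ?S 1) (at_left 1)"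
    by (intro tendsto_intros)
  moreover have "eventually (\<lambda>r. r \<in> {0<..<1}) (at_left (1::real))"
    by (rule eventually_at_left_real) simp
  then have "eventually (\<lambda>r. ?S r \<le> M ^ 2) (at_left 1)"
    by (rule eventually_mono) (rule bessel_inequality_circle[OF hol M], auto)
  ultimately have "?S 1 \<le> M ^ 2"
    by (rule tendsto_upperbound) (simp add: trivial_limit_at_left_real)
  then show ?thesis by simp
qed

lemma bounded_holomorphic_taylor_coeffs:
  assumes hol: "g holomorphic_on ball 0 1" and M: "\<And>z. z \<in> ball 0 1 \<Longrightarrow> norm (g z) \<le> M"
  shows "summable (\<lambda>k. norm ((deriv ^^ k) g 0 / fact k) ^ 2)"
    and "(\<lambda>k. (deriv ^^ k) g 0 / fact k) \<longlonglongrightarrow> 0"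
proof -
  show sm: "summable (\<lambda>k. norm ((deriv ^^ k) g 0 / fact k) ^ 2)"
  proof (rule summableI_nonneg_bounded)
    fix n
    have "(\<Sum>k<n. norm ((deriv ^^ k) g 0 / fact k) ^ 2) \<le> (\<Sum>k\<le>n. norm ((deriv ^^ k) g 0 / fact k) ^ 2)"
      by (intro sum_mono2) auto
    then show "(\<Sum>k<n. norm ((deriv ^^ k) g 0 / fact k) ^ 2) \<le> M ^ 2"
      using bessel_inequality_taylor_coeffs[OF hol M, of n] by linarith
  qed auto
  have "(\<lambda>k. sqrt (norm ((deriv ^^ k) g 0 / fact k) ^ 2)) \<longlonglongrightarrow> sqrt 0"
    by (intro tendsto_real_sqrt summable_LIMSEQ_zero[OF sm])
  then show "(\<lambda>k. (deriv ^^ k) g 0 / fact k) \<longlonglongrightarrow> 0"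
    by (simp add: tendsto_norm_zero_iff)
qed

lemma coeffs_tendsto_zero:
  assumes hol: "f holomorphic_on ball 0 1"
    and M: "\<And>z. z \<in> ball 0 1 \<Longrightarrow> norm (f z) \<le> M"
    and ser: "\<And>z. z \<in> ball 0 1 \<Longrightarrow> (\<lambda>j. - a j * z ^ j) sums f z"
  shows "a \<longlonglongrightarrow> 0"
proof -
  have "(deriv ^^ k) f 0 / fact k = - a k" for k
    by (rule higher_deriv_eq_coeff_if_sums) (use ser in auto)
  with bounded_holomorphic_taylor_coeffs(2)[OF hol M] show ?thesis
    using tendsto_minus_cancel_left[of a 0 sequentially] by simp
qed

lemma tcoeff_weighted_decay:
  assumes hol: "f holomorphic_on ball 0 1"
    and M: "\<And>z. z \<in> ball 0 1 \<Longrightarrow> norm (f z) \<le> M"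
  shows "summable (\<lambda>k. (real (Suc k) * norm (tcoeff f (Suc k))) ^ 2)"
    and "(\<lambda>k. real k * norm (tcoeff f k)) \<longlonglongrightarrow> 0"
proof -
  define g where "g = deriv (exp_prim f)"
  have holg: "g holomorphic_on ball 0 1"
    unfolding g_def by (rule holomorphic_deriv[OF holomorphic_exp_prim[OF hol] open_ball])
  have gM: "norm (g z) \<le> M * exp M" if z: "z \<in> ball 0 1" for z
  proof -
    have "g z = f z * exp_prim f z"
      unfolding g_def by (rule DERIV_imp_deriv[OF exp_prim_has_field_derivative[OF hol z]])
    then show ?thesis
      using M[OF z] norm_exp_prim_bounds(1)[OF hol M z]
      by (simp add: norm_mult mult_mono order_trans[OF norm_ge_zero M[OF z]])
  qed
  have cg: "(deriv ^^ k) g 0 / fact k = of_nat (Suc k) * tcoeff f (Suc k)" for k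
  proof -
    have "(deriv ^^ k) g 0 = (deriv ^^ Suc k) (exp_prim f) 0"
      unfolding g_def funpow_Suc_right by simp
    then show ?thesis
      by (simp add: tcoeff_eq_higher_deriv_exp_prim fact_Suc field_simps del: of_nat_Suc)
  qed
  show "summable (\<lambda>k. (real (Suc k) * norm (tcoeff f (Suc k))) ^ 2)"
    using bounded_holomorphic_taylor_coeffs(1)[OF holg gM]
    by (simp add: cg norm_mult del: of_nat_Suc)
  have "(\<lambda>k. norm (of_nat (Suc k) * tcoeff f (Suc k))) \<longlonglongrightarrow> 0"
    using bounded_holomorphic_taylor_coeffs(2)[OF holg gM] by (simp add: cg tendsto_norm_zero)
  then have "(\<lambda>k. real (Suc k) * norm (tcoeff f (Suc k))) \<longlonglongrightarrow> 0"
    by (simp add: norm_mult del: of_nat_Suc)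
  then show "(\<lambda>k. real k * norm (tcoeff f k)) \<longlonglongrightarrow> 0"
    by (rule LIMSEQ_imp_Suc)
qed

lemma summable_norm_if_weighted_square_summable:
  fixes x :: "nat \<Rightarrow> 'a::real_normed_vector"
  assumes "summable (\<lambda>k. (real (Suc k) * norm (x (Suc k))) ^ 2)"
  shows "summable (\<lambda>k. norm (x k))"
proof -
  have "summable (\<lambda>k. inverse (real (Suc k) ^ 2))"
    using inverse_power_summable[of 2, where 'a=real] by (subst summable_Suc_iff) simp
  then have "summable (\<lambda>k. ((real (Suc k) * norm (x (Suc k))) ^ 2 + inverse (real (Suc k)) ^ 2) / 2)"
    by (intro summable_divide summable_add assms) (simp add: power_inverse)
  then have "summable (\<lambda>k. norm (x (Suc k)))"
  proof (rule summable_comparison_test'[where N=0])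
    fix k :: nat
    let ?u = "real (Suc k) * norm (x (Suc k))" and ?v = "inverse (real (Suc k))"
    have "norm (x (Suc k)) = ?u * ?v" by (simp del: of_nat_Suc)
    also have "\<dots> \<le> (?u ^ 2 + ?v ^ 2) / 2"
      using sum_squares_bound[of ?u ?v] by (simp add: power2_eq_square field_simps)
    finally show "norm (norm (x (Suc k))) \<le> (?u ^ 2 + ?v ^ 2) / 2" by simp
  qed
  then show ?thesis by (subst (asm) summable_Suc_iff)
qed

lemma summable_norm_tcoeff:
  assumes "f holomorphic_on ball 0 1" and "\<And>z. z \<in> ball 0 1 \<Longrightarrow> norm (f z) \<le> M"
  shows "summable (\<lambda>k. norm (tcoeff f k))"
  by (rule summable_norm_if_weighted_square_summable[OF tcoeff_weighted_decay(1)[OF assms]])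

lemma cesaro_mean_tendsto_zero:
  fixes b :: "nat \<Rightarrow> real"
  assumes "b \<longlonglongrightarrow> 0"
  shows "(\<lambda>n. (\<Sum>k\<le>n. b k) / real (Suc n)) \<longlonglongrightarrow> 0"
proof (rule LIMSEQ_I)
  fix e :: real assume "0 < e"
  then obtain K where K: "\<And>k. k \<ge> K \<Longrightarrow> norm (b k) < e / 2"
    using LIMSEQ_D[OF assms, of "e / 2"] by auto
  define C where "C = (\<Sum>k<K. norm (b k))"
  obtain n0 :: nat where n0: "2 * C / e < real n0" using reals_Archimedean2 by blast
  show "\<exists>n0. \<forall>n\<ge>n0. norm ((\<Sum>k\<le>n. b k) / real (Suc n) - 0) < e"
  proof (intro exI allI impI)
    fix n assume "n \<ge> n0"
    have "norm (\<Sum>k\<le>n. b k) \<le> (\<Sum>k\<in>{..<K} \<union> {K..n}. norm (b k))"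
      by (rule order_trans[OF norm_sum], rule sum_mono2) auto
    also have "\<dots> = C + (\<Sum>k\<in>{K..n}. norm (b k))"
      unfolding C_def by (rule sum.union_disjoint) auto
    also have "(\<Sum>k\<in>{K..n}. norm (b k)) \<le> real (card {K..n}) * (e / 2)"
      using K by (intro sum_bounded_above) (auto intro: less_imp_le)
    also have "\<dots> \<le> real (Suc n) * (e / 2)"
      using \<open>0 < e\<close> by (intro mult_right_mono) auto
    also have "C < real (Suc n) * (e / 2)"
    proof -
      have "2 * C < e * real n0" using n0 \<open>0 < e\<close> by (simp add: field_simps)
      also have "\<dots> \<le> e * real (Suc n)" using \<open>n \<ge> n0\<close> \<open>0 < e\<close> by (intro mult_left_mono) auto
      finally show ?thesis by (simp add: mult.commute)
    qed
    finally have "norm (\<Sum>k\<le>n. b k) < real (Suc n) * e" by (simp add: algebra_simps)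
    then show "norm ((\<Sum>k\<le>n. b k) / real (Suc n) - 0) < e"
      by (simp add: field_simps del: of_nat_Suc)
  qed
qed

section \<open>The partial sums are bounded below on the closed disc\<close>

lemma poly_spoly: "poly (spoly f n) z = (\<Sum>k\<le>n. tcoeff f k * z ^ k)"
  by (simp add: spoly_def poly_sum poly_monom)

lemma norm_exp_prim_sub_spoly_le:
  assumes hol: "f holomorphic_on ball 0 1" and sm: "summable (\<lambda>k. norm (tcoeff f k))"
    and z: "z \<in> ball 0 1"
  shows "norm (exp_prim f z - poly (spoly f n) z) \<le> (\<Sum>i. norm (tcoeff f (i + Suc n)))"
proof -
  let ?t = "tcoeff f"
  from sums_split_initial_segment[OF exp_prim_sums[OF hol z], of "Suc n"]
  have tail: "(\<lambda>i. ?t (i + Suc n) * z ^ (i + Suc n)) sums (exp_prim f z - poly (spoly f n) z)"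
    by (simp add: poly_spoly lessThan_Suc_atMost)
  have smn: "summable (\<lambda>i. norm (?t (i + Suc n)))"
    using sm by (rule summable_ignore_initial_segment)
  have le: "norm (?t (i + Suc n) * z ^ (i + Suc n)) \<le> norm (?t (i + Suc n))" for i
  proof -
    have "norm z ^ (i + Suc n) \<le> 1" using z by (intro power_le_one) auto
    then show ?thesis unfolding norm_mult norm_power by (intro mult_left_le) auto
  qed
  have sn: "summable (\<lambda>i. norm (?t (i + Suc n) * z ^ (i + Suc n)))"
    by (rule summable_comparison_test'[OF smn, where N=0]) (use le in simp)
  have "norm (exp_prim f z - poly (spoly f n) z) \<le> (\<Sum>i. norm (?t (i + Suc n) * z ^ (i + Suc n)))"
    using summable_norm[OF sn] tail by (simp add: sums_iff)
  also have "\<dots> \<le> (\<Sum>i. norm (?t (i + Suc n)))"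
    by (rule suminf_le[OF le sn smn])
  finally show ?thesis .
qed

lemma eventually_spoly_bounded_below:
  assumes hol: "f holomorphic_on ball 0 1"
    and M: "\<And>z. z \<in> ball 0 1 \<Longrightarrow> norm (f z) \<le> M"
  shows "eventually (\<lambda>n. \<forall>z. norm z \<le> 1 \<longrightarrow> exp (- M) / 2 \<le> norm (poly (spoly f n) z)) sequentially"
proof -
  have sm: "summable (\<lambda>k. norm (tcoeff f k))" by (rule summable_norm_tcoeff[OF hol M])
  obtain n2 where n2: "\<And>n. n \<ge> n2 \<Longrightarrow> norm (\<Sum>i. norm (tcoeff f (i + n))) < exp (- M) / 2"
    using suminf_exist_split[OF _ sm, of "exp (- M) / 2"] by auto
  have "exp (- M) / 2 \<le> norm (poly (spoly f n) z)" if n: "n \<ge> n2" and z: "norm z \<le> 1" for n z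
  proof -
    let ?B = "{z. exp (- M) / 2 \<le> norm (poly (spoly f n) z)}"
    have "ball 0 1 \<subseteq> ?B"
    proof
      fix w :: complex assume w: "w \<in> ball 0 1"
      have "norm (exp_prim f w - poly (spoly f n) w) < exp (- M) / 2"
        using norm_exp_prim_sub_spoly_le[OF hol sm w, of n] n2[of "Suc n"] n
        by (simp add: suminf_nonneg sm summable_ignore_initial_segment)
      moreover have "exp (- M) \<le> norm (exp_prim f w)" by (rule norm_exp_prim_bounds(2)[OF hol M w])
      ultimately show "w \<in> ?B"
        using norm_triangle_ineq2[of "exp_prim f w" "poly (spoly f n) w"] by simp
    qed
    moreover have "closed ?B" by (intro closed_Collect_le continuous_intros)
    ultimately have "closure (ball 0 1) \<subseteq> ?B" by (rule closure_minimal)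
    then show ?thesis using z by auto
  qed
  then show ?thesis unfolding eventually_sequentially by blast
qed

section \<open>The self-inversive polynomial \<open>P\<^sub>n\<close>\<close>

lemma coeff_Ppoly:
  "coeff (Ppoly f n) k =
     (if k \<le> n then tcoeff f k else if k \<le> 2*n+1 then cnj (tcoeff f (2*n+1-k)) else 0)"
proof -
  have "coeff (\<Sum>j\<le>n. monom (cnj (tcoeff f j)) (2*n+1 - j)) k =
        (\<Sum>j\<le>n. if 2*n+1-j = k then cnj (tcoeff f j) else 0)"
    by (simp add: coeff_sum coeff_monom)
  also have "\<dots> = (if n < k \<and> k \<le> 2*n+1 then cnj (tcoeff f (2*n+1-k)) else 0)"
  proof (cases "n < k \<and> k \<le> 2*n+1")
    case True
    then have "(\<Sum>j\<le>n. if 2*n+1-j = k then cnj (tcoeff f j) else 0) =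
               (\<Sum>j\<in>{2*n+1-k}. if 2*n+1-j = k then cnj (tcoeff f j) else 0)"
      by (intro sum.mono_neutral_right) auto
    then show ?thesis using True by simp
  next
    case False
    then show ?thesis by (intro trans[OF sum.neutral]) auto
  qed
  moreover have "coeff (spoly f n) k = (if k \<le> n then tcoeff f k else 0)"
    unfolding spoly_def by (simp add: coeff_sum coeff_monom)
  ultimately show ?thesis unfolding Ppoly_def by (auto simp: coeff_add)
qed

lemma degree_Ppoly: "degree (Ppoly f n) = 2*n+1"
  and lead_coeff_Ppoly: "lead_coeff (Ppoly f n) = 1"
proof -
  have lead: "coeff (Ppoly f n) (2*n+1) = 1" by (simp add: coeff_Ppoly)
  have "degree (Ppoly f n) \<le> 2*n+1" by (rule degree_le) (auto simp: coeff_Ppoly)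
  moreover have "degree (Ppoly f n) \<ge> 2*n+1" using lead by (intro le_degree) simp
  ultimately show deg: "degree (Ppoly f n) = 2*n+1" by simp
  show "lead_coeff (Ppoly f n) = 1" using lead deg by simp
qed

lemma Ppoly_nonzero: "Ppoly f n \<noteq> 0"
  using lead_coeff_Ppoly[of f n] by auto

lemma poly_Ppoly_0: "poly (Ppoly f n) 0 = 1"
  by (simp add: poly_0_coeff_0 coeff_Ppoly)

lemma coeff_Ppoly_reflect:
  "i \<le> 2*n+1 \<Longrightarrow> coeff (Ppoly f n) (2*n+1-i) = cnj (coeff (Ppoly f n) i)"
  by (auto simp: coeff_Ppoly)

lemma poly_Ppoly_reflect:
  assumes "z \<noteq> 0"
  shows "poly (Ppoly f n) z = z ^ (2*n+1) * cnj (poly (Ppoly f n) (inverse (cnj z)))"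
proof -
  let ?N = "2*n+1" and ?p = "coeff (Ppoly f n)"
  have "z ^ ?N * cnj (poly (Ppoly f n) (inverse (cnj z))) =
        (\<Sum>i\<le>?N. cnj (?p i) * (z ^ ?N * inverse z ^ i))"
    unfolding poly_altdef degree_Ppoly cnj_sum sum_distrib_left
    by (intro sum.cong refl) (simp add: mult_ac)
  also have "\<dots> = (\<Sum>i\<le>?N. ?p (?N - i) * z ^ (?N - i))"
    using assms
    by (intro sum.cong refl) (simp add: coeff_Ppoly_reflect[simplified] power_diff_conv_inverse)
  also have "\<dots> = (\<Sum>i\<le>?N. ?p i * z ^ i)"
    by (rule sum.reindex_bij_witness[where i="\<lambda>i. ?N - i" and j="\<lambda>i. ?N - i"]) auto
  also have "\<dots> = poly (Ppoly f n) z" by (simp add: poly_altdef degree_Ppoly)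
  finally show ?thesis ..
qed

lemma poly_Ppoly:
  "poly (Ppoly f n) z =
     (\<Sum>k\<le>n. tcoeff f k * z ^ k) + (\<Sum>k\<le>n. cnj (tcoeff f k) * z ^ (2*n+1-k))"
  by (simp add: Ppoly_def poly_spoly poly_sum poly_monom)

lemma poly_Ppoly_eq_spoly_plus_reversed:
  "poly (Ppoly f n) z = poly (spoly f n) z + z ^ (n+1) * (\<Sum>k\<le>n. cnj (tcoeff f k) * z ^ (n-k))"
proof -
  have "(\<Sum>k\<le>n. cnj (tcoeff f k) * z ^ (2*n+1-k)) =
        (\<Sum>k\<le>n. z ^ (n+1) * (cnj (tcoeff f k) * z ^ (n-k)))"
  proof (intro sum.cong refl)
    fix k assume "k \<in> {..n}"
    then have e: "2*n+1-k = (n+1) + (n-k)" by auto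
    show "cnj (tcoeff f k) * z ^ (2*n+1-k) = z ^ (n+1) * (cnj (tcoeff f k) * z ^ (n-k))"
      unfolding e power_add by (simp add: mult_ac)
  qed
  then show ?thesis by (simp add: poly_Ppoly poly_spoly sum_distrib_left)
qed

lemma cnj_eq_inverse_if_norm_1: "norm z = 1 \<Longrightarrow> cnj z = inverse z"
  by (metis complex_norm_square inverse_unique mult.right_neutral of_real_1 power_one)

lemma reversed_spoly_on_circle:
  assumes "norm z = 1"
  shows "(\<Sum>k\<le>n. cnj (tcoeff f k) * z ^ (n-k)) = z ^ n * cnj (poly (spoly f n) z)"
  unfolding poly_spoly cnj_sum sum_distrib_left
proof (intro sum.cong refl)
  fix k assume "k \<in> {..n}"
  then show "cnj (tcoeff f k) * z ^ (n-k) = z ^ n * cnj (tcoeff f k * z ^ k)"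
    using assms by (subst power_diff_conv_inverse) (auto simp: cnj_eq_inverse_if_norm_1 power_inverse)
qed

lemma Ppoly_nonzero_in_disc:
  assumes nz: "s_nonvanishing f n" and w: "norm w < 1"
  shows "poly (Ppoly f n) w \<noteq> 0"
proof -
  let ?s = "poly (spoly f n)"
  have nz': "?s z \<noteq> 0" if "norm z \<le> 1" for z using nz that by (simp add: s_nonvanishing_def)
  define h where "h z = z ^ n * (\<Sum>k\<le>n. cnj (tcoeff f k) * z ^ (n-k)) / ?s z" for z
  have "norm (h w) \<le> 1"
  proof (rule maximum_modulus_frontier[where S="ball 0 1" and f=h and \<xi>=w])
    show "h holomorphic_on interior (ball 0 1)"
      unfolding h_def using nz' by (intro holomorphic_intros) auto
    show "continuous_on (closure (ball 0 1)) h"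
      unfolding h_def using nz' by (intro continuous_intros) auto
    fix u :: complex assume "u \<in> frontier (ball 0 1)"
    then have u: "norm u = 1" by simp
    have "norm (h u) = norm (u ^ n * (u ^ n * cnj (?s u)) / ?s u)"
      unfolding h_def using reversed_spoly_on_circle[OF u] by simp
    also have "\<dots> = 1" using u nz'[of u] by (simp add: norm_mult norm_divide norm_power)
    finally show "norm (h u) \<le> 1" by simp
  qed (use w in auto)
  then have "norm (w * h w) < 1"
    using w mult_left_mono[of "norm (h w)" 1 "norm w"] by (simp add: norm_mult)
  then have "1 + w * h w \<noteq> 0"
    by (metis add.inverse_unique norm_minus_cancel norm_one order_less_irrefl)
  moreover have "poly (Ppoly f n) w = ?s w * (1 + w * h w)"
    using nz'[of w] w by (simp add: poly_Ppoly_eq_spoly_plus_reversed h_def field_simps)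
  ultimately show ?thesis using nz'[of w] w by simp
qed

lemma Ppoly_root_on_circle:
  assumes nz: "s_nonvanishing f n" and root: "poly (Ppoly f n) z = 0"
  shows "norm z = 1"
proof (rule ccontr)
  assume "norm z \<noteq> 1"
  have "z \<noteq> 0" using root by (auto simp: poly_Ppoly_0)
  from \<open>norm z \<noteq> 1\<close> consider "norm z < 1" | "norm (inverse (cnj z)) < 1"
    by (metis complex_mod_cnj linorder_neqE_linordered_idom norm_inverse inverse_less_1_iff)
  then show False
  proof cases
    case 1
    then show False using Ppoly_nonzero_in_disc[OF nz] root by blast
  next
    case 2
    then have "poly (Ppoly f n) (inverse (cnj z)) \<noteq> 0" by (rule Ppoly_nonzero_in_disc[OF nz])
    then show False using poly_Ppoly_reflect[OF \<open>z \<noteq> 0\<close>, of f n] root \<open>z \<noteq> 0\<close> by simp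
  qed
qed

lemma pderiv_sum: "pderiv (sum g A) = (\<Sum>x\<in>A. pderiv (g x))"
  using higher_pderiv_sum[of 1 g A] by simp

lemma poly_pderiv_Ppoly:
  "z * poly (pderiv (Ppoly f n)) z = (\<Sum>k\<le>n. of_nat k * tcoeff f k * z ^ k) +
      (\<Sum>k\<le>n. of_nat (2*n+1-k) * cnj (tcoeff f k) * z ^ (2*n+1-k))"
proof -
  have "z * poly (pderiv (Ppoly f n)) z = (\<Sum>k\<le>n. z * (of_nat k * tcoeff f k * z ^ (k - 1))) +
      (\<Sum>k\<le>n. z * (of_nat (2*n+1-k) * cnj (tcoeff f k) * z ^ (2*n+1-k - 1)))"
    by (simp add: Ppoly_def spoly_def pderiv_add pderiv_sum pderiv_monom poly_sum poly_monom
        sum_distrib_left distrib_left)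
  also have "(\<Sum>k\<le>n. z * (of_nat k * tcoeff f k * z ^ (k - 1))) =
      (\<Sum>k\<le>n. of_nat k * tcoeff f k * z ^ k)"
    by (intro sum.cong refl) (auto simp: mult_ac power_eq_if)
  also have "(\<Sum>k\<le>n. z * (of_nat (2*n+1-k) * cnj (tcoeff f k) * z ^ (2*n+1-k - 1))) =
      (\<Sum>k\<le>n. of_nat (2*n+1-k) * cnj (tcoeff f k) * z ^ (2*n+1-k))"
  proof (intro sum.cong refl)
    fix k assume "k \<in> {..n}"
    then have e: "2*n+1-k = Suc (2*n+1-k - 1)" by auto
    show "z * (of_nat (2*n+1-k) * cnj (tcoeff f k) * z ^ (2*n+1-k - 1)) =
          of_nat (2*n+1-k) * cnj (tcoeff f k) * z ^ (2*n+1-k)"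
      by (subst (3) e) (simp only: power_Suc mult_ac)
  qed
  finally show ?thesis .
qed

lemma poly_pderiv_Ppoly_at_root:
  fixes f :: "complex \<Rightarrow> complex" and n :: nat and z :: complex
  defines "d \<equiv> \<Sum>k\<le>n. of_nat k * tcoeff f k * z ^ k"
  assumes root: "poly (Ppoly f n) z = 0" and zc: "norm z = 1"
  shows "z * poly (pderiv (Ppoly f n)) z =
    d - of_nat (2*n+1) * poly (spoly f n) z - z ^ (2*n+1) * cnj d"
proof -
  let ?t = "tcoeff f"
  define N where "N = 2*n+1"
  define A where "A = (\<Sum>k\<le>n. ?t k * z ^ k)"
  define B where "B = (\<Sum>k\<le>n. cnj (?t k) * z ^ (N-k))"
  have "z \<noteq> 0" using zc by auto
  have s1: "(\<Sum>k\<le>n. of_nat (N-k) * cnj (?t k) * z ^ (N-k)) =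
            of_nat N * B - (\<Sum>k\<le>n. of_nat k * cnj (?t k) * z ^ (N-k))"
    unfolding B_def sum_distrib_left sum_subtractf[symmetric]
    by (intro sum.cong refl) (auto simp: N_def of_nat_diff algebra_simps)
  have s2: "(\<Sum>k\<le>n. of_nat k * cnj (?t k) * z ^ (N-k)) = z ^ N * cnj d"
    unfolding d_def cnj_sum sum_distrib_left
  proof (intro sum.cong refl)
    fix k assume "k \<in> {..n}"
    then have "k \<le> N" by (simp add: N_def)
    then show "of_nat k * cnj (?t k) * z ^ (N-k) = z ^ N * cnj (of_nat k * ?t k * z ^ k)"
      using zc \<open>z \<noteq> 0\<close> by (simp add: power_diff_conv_inverse cnj_eq_inverse_if_norm_1 power_inverse mult_ac)
  qed
  have "A + B = 0" using root by (simp add: poly_Ppoly A_def B_def N_def)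
  then have "B = - A" by (simp add: add_eq_0_iff)
  then show ?thesis
    using poly_pderiv_Ppoly[of z f n] unfolding d_def[symmetric] N_def[symmetric] s1 s2
    by (simp add: A_def poly_spoly)
qed

lemma order_Ppoly_root:
  assumes m: "0 < m" and low: "\<And>z. norm z \<le> 1 \<Longrightarrow> m \<le> norm (poly (spoly f n) z)"
    and small: "2 * (\<Sum>k\<le>n. real k * norm (tcoeff f k)) < real (2*n+1) * m"
    and root: "poly (Ppoly f n) z = 0"
  shows "order z (Ppoly f n) = 1"
proof -
  define d where "d = (\<Sum>k\<le>n. of_nat k * tcoeff f k * z ^ k)"
  have "s_nonvanishing f n" using low m unfolding s_nonvanishing_def by force
  then have zc: "norm z = 1" by (rule Ppoly_root_on_circle[OF _ root])
  have d_le: "norm d \<le> (\<Sum>k\<le>n. real k * norm (tcoeff f k))"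
    unfolding d_def
    by (rule order_trans[OF norm_sum], rule sum_mono) (use zc in \<open>simp add: norm_mult norm_power\<close>)
  have "poly (pderiv (Ppoly f n)) z \<noteq> 0"
  proof
    assume "poly (pderiv (Ppoly f n)) z = 0"
    then have "of_nat (2*n+1) * poly (spoly f n) z = d - z ^ (2*n+1) * cnj d"
      using poly_pderiv_Ppoly_at_root[OF root zc] unfolding d_def[symmetric]
      by (simp add: algebra_simps)
    then have "norm (of_nat (2*n+1) * poly (spoly f n) z) \<le> norm d + norm (z ^ (2*n+1) * cnj d)"
      by (metis norm_triangle_ineq4)
    also have "norm (z ^ (2*n+1) * cnj d) = norm d" using zc by (simp add: norm_mult norm_power)
    finally have "real (2*n+1) * norm (poly (spoly f n) z) \<le> 2 * norm d"
      by (simp add: norm_mult del: of_nat_Suc)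
    moreover have "real (2*n+1) * m \<le> real (2*n+1) * norm (poly (spoly f n) z)"
      using low[of z] zc by (intro mult_left_mono) auto
    ultimately show False using small d_le by linarith
  qed
  then have "order z (pderiv (Ppoly f n)) = 0" using order_root by blast
  then show ?thesis using order_pderiv[OF Ppoly_nonzero root] by simp
qed

lemma card_roots_eq_degree_if_simple:
  fixes p :: "complex poly"
  assumes "p \<noteq> 0" and "\<And>z. poly p z = 0 \<Longrightarrow> order z p = 1"
  shows "card {z. poly p z = 0} = degree p"
proof -
  have "degree p = size (proots p)" by (simp add: size_proots_complex)
  also have "\<dots> = sum (count (proots p)) {z. poly p z = 0}"
    by (simp add: size_multiset_overloaded_eq set_count_proots[OF assms(1)])
  also have "\<dots> = card {z. poly p z = 0}"
    by (simp add: count_proots[OF assms(1)] assms(2))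
  finally show ?thesis ..
qed

lemma norm_sum_mset_le:
  fixes g :: "'a \<Rightarrow> 'b::real_normed_vector"
  assumes "\<And>x. x \<in># X \<Longrightarrow> norm (g x) \<le> 1"
  shows "norm (\<Sum>x\<in>#X. g x) \<le> real (size X)"
  using assms
proof (induction X)
  case (add x X)
  have "norm (\<Sum>y\<in>#add_mset x X. g y) \<le> norm (g x) + norm (\<Sum>y\<in>#X. g y)"
    by (simp add: norm_triangle_ineq)
  also have "\<dots> \<le> 1 + real (size X)" using add by (intro add_mono) auto
  finally show ?case by simp
qed simp

lemma norm_Spow_le:
  assumes "\<And>z. poly (Ppoly f n) z = 0 \<Longrightarrow> norm z = 1"
  shows "norm (Spow f n v) \<le> real (2*n+1)"
proof -
  have "norm (Spow f n v) \<le> real (size (proots (Ppoly f n)))"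
    unfolding Spow_def
    by (rule norm_sum_mset_le) (use assms Ppoly_nonzero in \<open>simp add: norm_power norm_inverse\<close>)
  then show ?thesis by (simp add: size_proots_complex degree_Ppoly)
qed

section \<open>Newton's identities for the power sums\<close>

lemma tcoeff_fps_deriv:
  assumes hol: "f holomorphic_on ball 0 1"
    and ser: "\<And>z. z \<in> ball 0 1 \<Longrightarrow> (\<lambda>j. - a j * z ^ j) sums f z"
  shows "fps_deriv (Abs_fps (tcoeff f)) = - (Abs_fps (tcoeff f) * Abs_fps a)"
proof -
  let ?e = "Abs_fps (tcoeff f)"
  have "exp_prim f has_fps_expansion fps_expansion (exp_prim f) 0"
    by (rule has_fps_expansion_fps_expansion[OF open_ball _ holomorphic_exp_prim[OF hol]]) simp
  then have E: "exp_prim f has_fps_expansion ?e"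
    by (simp add: fps_expansion_def tcoeff_eq_higher_deriv_exp_prim[abs_def])
  have ev: "eventually (\<lambda>u. u \<in> ball 0 1) (nhds (0::complex))"
    by (intro eventually_nhds_in_open) auto
  have F: "f has_fps_expansion (- Abs_fps a)"
    by (rule has_fps_expansionI, rule eventually_mono[OF ev]) (use ser in simp)
  have dE: "deriv (exp_prim f) has_fps_expansion fps_deriv ?e"
    by (rule has_fps_expansion_deriv[OF E])
  have FE: "(\<lambda>z. f z * exp_prim f z) has_fps_expansion (- Abs_fps a) * ?e"
    by (rule has_fps_expansion_mult[OF F E])
  have ODE: "eventually (\<lambda>z. deriv (exp_prim f) z = f z * exp_prim f z) (nhds 0)"
    by (rule eventually_mono[OF ev])
       (use exp_prim_has_field_derivative[OF hol] DERIV_imp_deriv in blast)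
  show ?thesis
  proof (rule fps_ext)
    fix m
    have "fps_nth (fps_deriv ?e) m = (deriv ^^ m) (deriv (exp_prim f)) 0 / fact m"
      by (rule fps_nth_fps_expansion[OF dE])
    also have "(deriv ^^ m) (deriv (exp_prim f)) 0 = (deriv ^^ m) (\<lambda>z. f z * exp_prim f z) 0"
      by (rule higher_deriv_cong_ev[OF ODE refl])
    also have "\<dots> / fact m = fps_nth ((- Abs_fps a) * ?e) m"
      by (rule fps_nth_fps_expansion[OF FE, symmetric])
    finally show "fps_nth (fps_deriv ?e) m = fps_nth (- (?e * Abs_fps a)) m"
      by (simp add: mult.commute)
  qed
qed

lemma fps_X_minus_const_times_geometric:
  fixes z :: complex
  assumes "z \<noteq> 0"
  shows "(fps_X + fps_const (-z)) * Abs_fps (\<lambda>k. - (inverse z ^ (k+1))) = 1"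
proof (rule fps_ext)
  fix m
  show "fps_nth ((fps_X + fps_const (-z)) * Abs_fps (\<lambda>k. - (inverse z ^ (k+1)))) m =
        fps_nth (1 :: complex fps) m"
  proof (cases m)
    case 0
    then show ?thesis using assms by (simp add: algebra_simps fps_mult_nth)
  next
    case (Suc k)
    then show ?thesis using assms by (simp add: distrib_right field_simps)
  qed
qed

lemma fps_of_poly_prod_mset: "fps_of_poly (\<Prod>x\<in>#X. g x) = (\<Prod>x\<in>#X. fps_of_poly (g x))"
  by (induction X) (simp_all add: fps_of_poly_mult)

lemma fps_deriv_prod_linear:
  fixes Z :: "complex multiset"
  assumes "0 \<notin># Z"
  shows "fps_deriv (\<Prod>z\<in>#Z. fps_X + fps_const (-z)) =
         (\<Prod>z\<in>#Z. fps_X + fps_const (-z)) * Abs_fps (\<lambda>k. - (\<Sum>z\<in>#Z. inverse z ^ (k+1)))"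
  using assms
proof (induction Z)
  case empty
  then show ?case by (simp add: fps_ext)
next
  case (add x Z)
  let ?L = "fps_X + fps_const (-x)"
  let ?P = "\<Prod>z\<in>#Z. fps_X + fps_const (-z)"
  let ?T = "Abs_fps (\<lambda>k. - (\<Sum>z\<in>#Z. inverse z ^ (k+1)))"
  let ?Tx = "Abs_fps (\<lambda>k. - (inverse x ^ (k+1)))"
  have "fps_deriv (\<Prod>z\<in>#add_mset x Z. fps_X + fps_const (-z)) = ?P + ?L * (?P * ?T)"
    using add by (simp add: fps_deriv_mult)
  also have "\<dots> = (?L * ?Tx) * ?P + ?L * (?P * ?T)"
    using fps_X_minus_const_times_geometric[of x] add.prems by simp
  also have "\<dots> = (?L * ?P) * (?Tx + ?T)"
    by (simp add: algebra_simps)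
  also have "?Tx + ?T = Abs_fps (\<lambda>k. - (\<Sum>z\<in>#add_mset x Z. inverse z ^ (k+1)))"
    by (rule fps_ext) simp
  finally show ?case by simp
qed

lemma fps_deriv_Ppoly:
  "fps_deriv (fps_of_poly (Ppoly f n)) =
     - (fps_of_poly (Ppoly f n) * Abs_fps (\<lambda>k. Spow f n (k+1)))"
proof -
  let ?p = "Ppoly f n"
  have decomp: "?p = (\<Prod>x\<in>#proots ?p. [:-x, 1:])"
    using complex_poly_decompose_multiset[of ?p] lead_coeff_Ppoly[of f n] by simp
  have "0 \<notin># proots ?p" using poly_Ppoly_0[of f n] Ppoly_nonzero[of f n] by auto
  moreover have "fps_of_poly ?p = (\<Prod>x\<in>#proots ?p. fps_X + fps_const (-x))"
    by (subst decomp) (simp add: fps_of_poly_prod_mset fps_of_poly_linear)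
  moreover have "Abs_fps (\<lambda>k. - (\<Sum>z\<in>#proots ?p. inverse z ^ (k+1))) =
      - Abs_fps (\<lambda>k. Spow f n (k+1))"
    by (rule fps_ext) (simp add: Spow_def)
  ultimately show ?thesis by (simp add: fps_deriv_prod_linear)
qed

lemma Spow_sub_coeff:
  assumes hol: "f holomorphic_on ball 0 1"
    and ser: "\<And>z. z \<in> ball 0 1 \<Longrightarrow> (\<lambda>j. - a j * z ^ j) sums f z"
    and "k \<le> n"
  shows "Spow f n (k+1) - a k =
     (if k < n then 0 else of_nat (n+1) * (tcoeff f (n+1) - cnj (tcoeff f n)))"
  using \<open>k \<le> n\<close>
proof (induction k rule: less_induct)
  case (less k)
  let ?Q = "coeff (Ppoly f n)"
  let ?t = "tcoeff f"
  let ?D = "\<lambda>i. Spow f n (i+1) - a i"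
  have Q: "?Q i = ?t i" if "i \<le> n" for i using that by (simp add: coeff_Ppoly)
  have P_rec: "of_nat (k+1) * ?Q (k+1) = - (\<Sum>i=0..k. ?Q i * Spow f n (k - i + 1))"
    using arg_cong[OF fps_deriv_Ppoly[of f n], of "\<lambda>F. fps_nth F k"]
    by (simp add: fps_mult_nth)
  have E_rec: "of_nat (k+1) * ?t (k+1) = - (\<Sum>i=0..k. ?t i * a (k - i))"
    using arg_cong[OF tcoeff_fps_deriv[OF hol ser], of "\<lambda>F. fps_nth F k"]
    by (simp add: fps_mult_nth)
  have "(\<Sum>i=0..k. ?Q i * ?D (k - i)) =
      (\<Sum>i=0..k. ?Q i * Spow f n (k - i + 1)) - (\<Sum>i=0..k. ?t i * a (k - i))"
    using less.prems by (simp add: algebra_simps sum_subtractf Q)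
  also have "\<dots> = of_nat (k+1) * (?t (k+1) - ?Q (k+1))"
    using P_rec E_rec by (simp add: algebra_simps)
  finally have conv: "(\<Sum>i=0..k. ?Q i * ?D (k - i)) = of_nat (k+1) * (?t (k+1) - ?Q (k+1))" .
  have "(\<Sum>i=1..k. ?Q i * ?D (k - i)) = 0"
    using less.IH less.prems by (intro sum.neutral ballI) auto
  then have "(\<Sum>i=0..k. ?Q i * ?D (k - i)) = ?D k"
    by (simp add: sum.atLeast_Suc_atMost Q)
  with conv have "?D k = of_nat (k+1) * (?t (k+1) - ?Q (k+1))" by simp
  then show ?case using less.prems by (auto simp: coeff_Ppoly)
qed

lemma eventually_Ppoly_roots_simple_on_circle:
  assumes hol: "f holomorphic_on ball 0 1"
    and M: "\<And>z. z \<in> ball 0 1 \<Longrightarrow> norm (f z) \<le> M"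
  shows "eventually (\<lambda>n. s_nonvanishing f n \<and>
           (\<forall>z. poly (Ppoly f n) z = 0 \<longrightarrow> norm z = 1 \<and> order z (Ppoly f n) = 1)) sequentially"
proof -
  define m where "m = exp (- M) / 2"
  have m: "0 < m" by (simp add: m_def)
  have "(\<lambda>n. (\<Sum>k\<le>n. real k * norm (tcoeff f k)) / real (Suc n)) \<longlonglongrightarrow> 0"
    by (rule cesaro_mean_tendsto_zero[OF tcoeff_weighted_decay(2)[OF hol M]])
  then have "eventually (\<lambda>n. (\<Sum>k\<le>n. real k * norm (tcoeff f k)) / real (Suc n) < m / 2) sequentially"
    using m by (intro order_tendstoD(2)) auto
  moreover have "eventually (\<lambda>n. \<forall>z. norm z \<le> 1 \<longrightarrow> m \<le> norm (poly (spoly f n) z)) sequentially"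
    unfolding m_def by (rule eventually_spoly_bounded_below[OF hol M])
  ultimately show ?thesis
  proof eventually_elim
    case (elim n)
    then have low: "\<And>z. norm z \<le> 1 \<Longrightarrow> m \<le> norm (poly (spoly f n) z)" by blast
    have "2 * (\<Sum>k\<le>n. real k * norm (tcoeff f k)) < real (Suc n) * m"
      using elim(1) by (simp add: field_simps del: of_nat_Suc)
    also have "\<dots> \<le> real (2*n+1) * m" using m by (intro mult_right_mono) auto
    finally have small: "2 * (\<Sum>k\<le>n. real k * norm (tcoeff f k)) < real (2*n+1) * m" .
    have nv: "s_nonvanishing f n" using low m unfolding s_nonvanishing_def by force
    show ?case using nv Ppoly_root_on_circle[OF nv] order_Ppoly_root[OF m low small] by blast
  qed
qed

lemma Spow_sub_coeff_diagonal_tendsto_zero: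
  assumes hol: "f holomorphic_on ball 0 1"
    and M: "\<And>z. z \<in> ball 0 1 \<Longrightarrow> norm (f z) \<le> M"
    and ser: "\<And>z. z \<in> ball 0 1 \<Longrightarrow> (\<lambda>j. - a j * z ^ j) sums f z"
  shows "(\<lambda>n. Spow f n (n+1) - a n) \<longlonglongrightarrow> 0"
proof -
  let ?t = "tcoeff f"
  let ?g = "\<lambda>n. real (Suc n) * norm (?t (Suc n)) + (real n * norm (?t n) + norm (?t n))"
  have kt: "(\<lambda>k. real k * norm (?t k)) \<longlonglongrightarrow> 0"
    by (rule tcoeff_weighted_decay(2)[OF hol M])
  have t: "(\<lambda>k. norm (?t k)) \<longlonglongrightarrow> 0"
    by (rule summable_LIMSEQ_zero[OF summable_norm_tcoeff[OF hol M]])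
  have "?g \<longlonglongrightarrow> 0 + (0 + 0)"
    using LIMSEQ_Suc[OF kt] by (intro tendsto_add kt t) (simp del: of_nat_Suc)
  then have lim: "?g \<longlonglongrightarrow> 0" by simp
  have bound: "norm (Spow f n (n+1) - a n) \<le> ?g n" for n
  proof -
    have eq: "Spow f n (n+1) - a n = of_nat (Suc n) * (?t (Suc n) - cnj (?t n))"
      using Spow_sub_coeff[OF hol ser, of n n] by simp
    have "norm (Spow f n (n+1) - a n) \<le> real (Suc n) * (norm (?t (Suc n)) + norm (?t n))"
      unfolding eq norm_mult norm_of_nat using norm_triangle_ineq4[of "?t (Suc n)" "cnj (?t n)"]
      by (intro mult_left_mono) auto
    then show ?thesis by (simp add: algebra_simps)
  qed
  show ?thesis by (rule Lim_null_comparison[OF always_eventually[OF allI[OF bound]] lim])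
qed

definition error_bound :: "nat \<Rightarrow> nat \<Rightarrow> real \<Rightarrow> real \<Rightarrow> real" where
  "error_bound n j r \<epsilon> = r ^ (n+1) / (r - \<epsilon>) ^ j / (2 * \<epsilon> * (1 - r))"

lemma half_less_error_bound:
  assumes e: "0 < \<epsilon>" "\<epsilon> < r" "r < 1"
  shows "1/2 < error_bound n n r \<epsilon>"
proof -
  define x where "x = r - \<epsilon>"
  have x: "0 < x" "x < r" using e by (auto simp: x_def)
  have "x ^ n * (2 * \<epsilon> * (1 - r)) < r ^ n * (2 * r)"
  proof (rule mult_le_less_imp_less)
    show "x ^ n \<le> r ^ n" using x by (intro power_mono) auto
    have "\<epsilon> * (1 - r) < r * 1" using e by (intro mult_strict_mono) auto
    then show "2 * \<epsilon> * (1 - r) < 2 * r" by simp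
  qed (use x e in auto)
  then have "1/2 * (x ^ n * (2 * \<epsilon> * (1 - r))) < r ^ (n+1)" by (simp add: mult_ac)
  moreover have "0 < 2 * \<epsilon> * (1 - r)" "0 < x ^ n" using x e by auto
  ultimately show ?thesis
    unfolding error_bound_def x_def[symmetric] by (simp add: divide_divide_eq_left pos_less_divide_eq)
qed

lemma power_diff_ge_mult_power:
  fixes x r :: real
  assumes "0 \<le> x" "x \<le> r"
  shows "(r - x) * (real (Suc m) * x ^ m) \<le> r ^ Suc m - x ^ Suc m"
proof -
  have "(\<Sum>p<Suc m. x ^ m) \<le> (\<Sum>p<Suc m. r ^ p * x ^ (m - p))"
  proof (rule sum_mono)
    fix p assume "p \<in> {..<Suc m}"
    then have "x ^ m = x ^ p * x ^ (m - p)" by (simp add: power_add[symmetric])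
    also have "\<dots> \<le> r ^ p * x ^ (m - p)" using assms by (intro mult_right_mono power_mono) auto
    finally show "x ^ m \<le> r ^ p * x ^ (m - p)" .
  qed
  then have "(r - x) * (real (Suc m) * x ^ m) \<le> (r - x) * (\<Sum>p<Suc m. r ^ p * x ^ (m - p))"
    using assms by (intro mult_left_mono) auto
  also have "\<dots> = r ^ Suc m - x ^ Suc m" by (rule diff_power_eq_sum[symmetric])
  finally show ?thesis .
qed

lemma error_bound_beyond_degree:
  assumes e: "0 < \<epsilon>" "\<epsilon> < r" "r < 1" and j: "n < j"
  shows "real (2*n+2) < error_bound n j r \<epsilon>"
proof -
  define x where "x = r - \<epsilon>"
  have x: "0 < x" "x < r" "x < 1" using e by (auto simp: x_def)
  have "\<epsilon> * (real (Suc (n+1)) * x ^ (n+1)) \<le> r ^ Suc (n+1) - x ^ Suc (n+1)"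
    using power_diff_ge_mult_power[of x r "n+1"] x by (simp add: x_def)
  moreover have "0 < x ^ Suc (n+1)" using x by simp
  ultimately have k1: "\<epsilon> * (real (Suc (n+1)) * x ^ (n+1)) < r ^ Suc (n+1)" by linarith
  have k2: "x ^ j \<le> x ^ (n+1)" using x j by (intro power_decreasing) auto
  have k3: "4 * r * (1 - r) \<le> 1"
    using sum_squares_bound[of "2*r - 1" 0] by (simp add: power2_eq_square algebra_simps)
  have pos: "0 < 2 * \<epsilon> * (1 - r)" "0 < x ^ j" using e x by auto
  have "real (2*n+2) * (x ^ j * (2 * \<epsilon> * (1 - r))) \<le>
        (2 * real (Suc (n+1))) * (x ^ (n+1) * (2 * \<epsilon> * (1 - r)))"
    using k2 pos by (intro mult_mono mult_right_mono) auto
  also have "\<dots> = 4 * (1 - r) * (\<epsilon> * (real (Suc (n+1)) * x ^ (n+1)))" by (simp add: algebra_simps)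
  also have "\<dots> < 4 * (1 - r) * r ^ Suc (n+1)" using k1 e by (intro mult_strict_left_mono) auto
  also have "\<dots> = (4 * r * (1 - r)) * r ^ (n+1)" by (simp add: algebra_simps)
  also have "\<dots> \<le> r ^ (n+1)" using k3 e by (intro mult_left_le_one_le) auto
  finally show ?thesis
    using pos unfolding error_bound_def x_def[symmetric]
    by (simp add: divide_divide_eq_left pos_less_divide_eq)
qed

lemma norm_Spow_sub_coeff_less_error_bound:
  assumes circle: "\<And>z. poly (Ppoly f n) z = 0 \<Longrightarrow> norm z = 1"
    and diagonal: "norm (Spow f n (n+1) - a n) \<le> 1/2"
    and a: "\<And>j. n < j \<Longrightarrow> norm (a j) \<le> 1"
    and e: "0 < \<epsilon>" "\<epsilon> < r" "r < 1" and "n \<le> j"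
  shows "norm (Spow f n (j+1) - a j) < error_bound n j r \<epsilon>"
proof (cases "j = n")
  case True
  have "norm (Spow f n (n+1) - a n) < error_bound n n r \<epsilon>"
    using diagonal half_less_error_bound[OF e, of n] by linarith
  then show ?thesis using True by simp
next
  case False
  then have "n < j" using \<open>n \<le> j\<close> by simp
  have "norm (Spow f n (j+1) - a j) \<le> norm (Spow f n (j+1)) + norm (a j)"
    by (rule norm_triangle_ineq4)
  also have "\<dots> \<le> real (2*n+1) + 1"
    using norm_Spow_le[OF circle] a[OF \<open>n < j\<close>] by (intro add_mono) auto
  also have "\<dots> < error_bound n j r \<epsilon>"
    using error_bound_beyond_degree[OF e \<open>n < j\<close>] by simp
  finally show ?thesis .
qed

theorem theorem1p1:
  fixes f :: "complex \<Rightarrow> complex" and a :: "nat \<Rightarrow> complex"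
  assumes hol: "f holomorphic_on ball 0 1"
    and bdd: "bounded (f ` ball 0 1)"
    and ser: "\<And>z. z \<in> ball 0 1 \<Longrightarrow> (\<lambda>j. - a j * z ^ j) sums f z"
  shows "(\<exists>n1. (\<exists>m. s_nonvanishing f m) \<and> n0 f \<le> n1 \<and>
            (\<forall>n\<ge>n1.
              (\<forall>z. poly (Ppoly f n) z = 0 \<longrightarrow> norm z = 1 \<and> order z (Ppoly f n) = 1) \<and>
              card {z. poly (Ppoly f n) z = 0} = 2*n+1 \<and>
              (\<forall>j<n. Spow f n (j+1) - a j = 0) \<and>
              (\<forall>j\<ge>n. \<forall>r \<epsilon>::real. 0 < \<epsilon> \<and> \<epsilon> < r \<and> r < 1 \<longrightarrow>
                 norm (Spow f n (j+1) - a j) < r ^ (n+1) / (r - \<epsilon>) ^ j / (2 * \<epsilon> * (1 - r)))))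
         \<and> (\<forall>n. (\<exists>m. s_nonvanishing f m) \<and> n0 f \<le> n \<longrightarrow> (\<forall>j<n. Spow f n (j+1) - a j = 0))"
proof -
  obtain M where M: "\<And>z. z \<in> ball 0 1 \<Longrightarrow> norm (f z) \<le> M"
    using bdd unfolding bounded_iff by blast
  have newton: "\<And>n j. j < n \<Longrightarrow> Spow f n (j+1) - a j = 0"
    using Spow_sub_coeff[OF hol ser] by simp
  have "eventually (\<lambda>j. norm (a j) < 1) sequentially"
    using order_tendstoD(2)[OF tendsto_norm_zero[OF coeffs_tendsto_zero[OF hol M ser]], of 1] by simp
  then have "eventually (\<lambda>n. \<forall>j\<ge>n. norm (a j) \<le> 1) sequentially"
    by (rule eventually_all_ge_at_top[OF eventually_mono]) simp
  moreover have "eventually (\<lambda>n. norm (Spow f n (n+1) - a n) < 1/2) sequentially"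
    using order_tendstoD(2)[OF tendsto_norm_zero[OF Spow_sub_coeff_diagonal_tendsto_zero[OF hol M ser]],
        of "1/2"]
    by simp
  moreover note eventually_Ppoly_roots_simple_on_circle[OF hol M]
  ultimately obtain n1 where n1: "\<And>n. n \<ge> n1 \<Longrightarrow>
      (\<forall>j\<ge>n. norm (a j) \<le> 1) \<and> norm (Spow f n (n+1) - a n) < 1/2 \<and> s_nonvanishing f n \<and>
      (\<forall>z. poly (Ppoly f n) z = 0 \<longrightarrow> norm z = 1 \<and> order z (Ppoly f n) = 1)"
    unfolding eventually_sequentially by (metis (no_types, lifting) max.boundedE nat_le_linear)
  have "s_nonvanishing f n1" using n1 by blast
  moreover from this have "n0 f \<le> n1" unfolding n0_def by (rule Least_le)
  moreover have "card {z. poly (Ppoly f n) z = 0} = 2*n+1 \<and>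
      (\<forall>j\<ge>n. \<forall>r \<epsilon>. 0 < \<epsilon> \<and> \<epsilon> < r \<and> r < 1 \<longrightarrow> norm (Spow f n (j+1) - a j) < error_bound n j r \<epsilon>)"
    if "n \<ge> n1" for n
    using n1[OF that] norm_Spow_sub_coeff_less_error_bound[of f n a]
      card_roots_eq_degree_if_simple[OF Ppoly_nonzero, of f n]
    by (auto simp: degree_Ppoly)
  ultimately show ?thesis using n1 newton unfolding error_bound_def by blast
qed

end
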